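(* Let $T$ be a ring with $J(T)=0$. Then either $T$ has a maximal subring or the center $C(T)$ of $T$ is integrally closed in $T$, i.e., every element of $T$ which is a root of a monic polynomial with coefficients in $C(T)$ belongs to $C(T)$.
   Context: All rings are associative with identity $1\neq0$; subrings contain the identity. A maximal subring of $T$ is a proper subring with no subring strictly between it and $T$. $J(T)$ is the Jacobson radical of $T$. *)

theory Defs
  imports Main
begin

text \<open>The ring T is the (possibly noncommutative) type 'a of class ring_1
  (associative, with identity, 1 \<noteq> 0). Subrings contain 1.\<close>

definition is_subring :: "'a::ring_1 set \<Rightarrow> bool" where
  "is_subring S \<longleftrightarrow> 1 \<in> S \<and> (\<forall>x\<in>S. \<forall>y\<in>S. x - y \<in> S \<and> x * y \<in> S)"

definition maximal_subring :: "'a::ring_1 set \<Rightarrow> bool" where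
  "maximal_subring S \<longleftrightarrow> is_subring S \<and> S \<noteq> UNIV \<and>
     (\<forall>R. is_subring R \<and> S \<subseteq> R \<longrightarrow> R = S \<or> R = UNIV)"

definition left_ideal :: "'a::ring_1 set \<Rightarrow> bool" where
  "left_ideal I \<longleftrightarrow> 0 \<in> I \<and> (\<forall>x\<in>I. \<forall>y\<in>I. x - y \<in> I) \<and> (\<forall>r. \<forall>x\<in>I. r * x \<in> I)"

definition maximal_left_ideal :: "'a::ring_1 set \<Rightarrow> bool" where
  "maximal_left_ideal I \<longleftrightarrow> left_ideal I \<and> I \<noteq> UNIV \<and>
     (\<forall>K. left_ideal K \<and> I \<subseteq> K \<longrightarrow> K = I \<or> K = UNIV)"

definition jacobson_radical :: "'a::ring_1 set" where
  "jacobson_radical = \<Inter> {I. maximal_left_ideal I}"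

definition ring_center :: "'a::ring_1 set" where
  "ring_center = {c. \<forall>x. c * x = x * c}"

definition integrally_closed_in :: "'a::ring_1 set \<Rightarrow> bool" where
  "integrally_closed_in S \<longleftrightarrow>
     (\<forall>t. (\<exists>n c. (\<forall>i<n. c i \<in> S) \<and> t ^ n + (\<Sum>i<n. c i * t ^ i) = 0) \<longrightarrow> t \<in> S)"

end

theory Submission
  imports Defs
begin

text \<open>Suppose t is integral over the centre but not central, say t x \<noteq> x t. Since J(T) = 0
  there is a maximal left ideal M with t x - x t \<notin> M. If M is not a two-sided ideal, its
  idealiser is a proper subring over which T is generated by one element. Otherwise T/M is a
  division ring in which t + M satisfies a monic equation of degree n over the image of the centre,
  so T/M has right dimension at most n over the centraliser of t + M; the preimage of that
  centraliser is a proper subring over which T is finitely generated. In both cases Zorn's lemma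
  yields a maximal subring.\<close>

lemma left_ideal_0: "left_ideal I \<Longrightarrow> 0 \<in> I"
  unfolding left_ideal_def by blast

lemma left_ideal_diff: "left_ideal I \<Longrightarrow> x \<in> I \<Longrightarrow> y \<in> I \<Longrightarrow> x - y \<in> I"
  unfolding left_ideal_def by blast

lemma left_ideal_mult_left: "left_ideal I \<Longrightarrow> x \<in> I \<Longrightarrow> r * x \<in> I"
  unfolding left_ideal_def by blast

lemma left_ideal_uminus: "left_ideal I \<Longrightarrow> x \<in> I \<Longrightarrow> - x \<in> I"
  using left_ideal_diff[of I 0 x] left_ideal_0[of I] by simp

lemma left_ideal_add: "left_ideal I \<Longrightarrow> x \<in> I \<Longrightarrow> y \<in> I \<Longrightarrow> x + y \<in> I"
  using left_ideal_diff[of I x "- y"] left_ideal_uminus[of I y] by simp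

lemma left_ideal_sum:
  "left_ideal I \<Longrightarrow> (\<And>i. i \<in> A \<Longrightarrow> f i \<in> I) \<Longrightarrow> sum f A \<in> I"
  by (induction A rule: infinite_finite_induct) (auto simp: left_ideal_0 left_ideal_add)

lemma left_ideal_UNIV: "left_ideal (UNIV :: 'a::ring_1 set)"
  unfolding left_ideal_def by blast

lemma left_ideal_eq_UNIV_iff: "left_ideal I \<Longrightarrow> I = UNIV \<longleftrightarrow> (1::'a::ring_1) \<in> I"
  using left_ideal_mult_left[of I 1] by auto

lemma left_ideal_times_plus:
  assumes K: "left_ideal K" and I: "left_ideal I"
  shows "left_ideal {k * u + x | k x. k \<in> K \<and> x \<in> I}"
  unfolding left_ideal_def
proof (intro conjI ballI allI)
  show "0 \<in> {k * u + x | k x. k \<in> K \<and> x \<in> I}"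
    using left_ideal_0[OF K] left_ideal_0[OF I] by force
next
  fix a b assume "a \<in> {k * u + x | k x. k \<in> K \<and> x \<in> I}" "b \<in> {k * u + x | k x. k \<in> K \<and> x \<in> I}"
  then obtain k x k' x' where "a = k * u + x" "b = k' * u + x'" "k \<in> K" "x \<in> I" "k' \<in> K" "x' \<in> I"
    by blast
  moreover have "k * u + x - (k' * u + x') = (k - k') * u + (x - x')"
    by (simp add: algebra_simps)
  ultimately show "a - b \<in> {k * u + x | k x. k \<in> K \<and> x \<in> I}"
    using left_ideal_diff[OF K] left_ideal_diff[OF I] by blast
next
  fix r a assume "a \<in> {k * u + x | k x. k \<in> K \<and> x \<in> I}"
  then obtain k x where "a = k * u + x" "k \<in> K" "x \<in> I" by blast
  moreover have "r * (k * u + x) = (r * k) * u + r * x"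
    by (simp add: algebra_simps)
  ultimately show "r * a \<in> {k * u + x | k x. k \<in> K \<and> x \<in> I}"
    using left_ideal_mult_left[OF K] left_ideal_mult_left[OF I] by blast
qed

lemma subset_times_plus: "left_ideal K \<Longrightarrow> I \<subseteq> {k * u + x | k x. k \<in> K \<and> x \<in> I}"
proof
  fix x assume "left_ideal K" "x \<in> I"
  moreover have "x = 0 * u + x" by simp
  ultimately show "x \<in> {k * u + x | k x. k \<in> K \<and> x \<in> I}" using left_ideal_0 by blast
qed

lemma maximal_left_ideal_left_ideal: "maximal_left_ideal I \<Longrightarrow> left_ideal I"
  unfolding maximal_left_ideal_def by blast

lemma maximal_left_ideal_one_notin: "maximal_left_ideal I \<Longrightarrow> (1::'a::ring_1) \<notin> I"
  unfolding maximal_left_ideal_def using left_ideal_eq_UNIV_iff by blast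

lemma maximal_left_ideal_eq_UNIV:
  "maximal_left_ideal I \<Longrightarrow> left_ideal K \<Longrightarrow> I \<subseteq> K \<Longrightarrow> x \<in> K \<Longrightarrow> x \<notin> I \<Longrightarrow> K = UNIV"
  unfolding maximal_left_ideal_def by blast

lemma maximal_left_ideal_left_inverse:
  assumes I: "maximal_left_ideal I" and x: "x \<notin> I"
  obtains y where "y * x - 1 \<in> I"
proof -
  have li: "left_ideal I" using I by (rule maximal_left_ideal_left_ideal)
  let ?L = "{r * x + m | r m. r \<in> UNIV \<and> m \<in> I}"
  have "x = 1 * x + 0" by simp
  then have "x \<in> ?L" using left_ideal_0[OF li] by blast
  moreover have "I \<subseteq> ?L" using subset_times_plus[OF left_ideal_UNIV] .
  ultimately have "?L = UNIV"
    using maximal_left_ideal_eq_UNIV[OF I left_ideal_times_plus[OF left_ideal_UNIV li]] x by blast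
  then obtain r m where "1 = r * x + m" "m \<in> I" by blast
  then have "r * x - 1 = - m" by (simp add: algebra_simps)
  with \<open>m \<in> I\<close> show ?thesis using that left_ideal_uminus[OF li] by metis
qed

lemma is_subring_one: "is_subring S \<Longrightarrow> 1 \<in> S"
  unfolding is_subring_def by blast

lemma is_subring_diff: "is_subring S \<Longrightarrow> x \<in> S \<Longrightarrow> y \<in> S \<Longrightarrow> x - y \<in> S"
  unfolding is_subring_def by blast

lemma is_subring_mult: "is_subring S \<Longrightarrow> x \<in> S \<Longrightarrow> y \<in> S \<Longrightarrow> x * y \<in> S"
  unfolding is_subring_def by blast

lemma is_subring_0: "is_subring S \<Longrightarrow> 0 \<in> S"
  using is_subring_diff[of S 1 1] is_subring_one[of S] by simp

lemma is_subring_add: "is_subring S \<Longrightarrow> x \<in> S \<Longrightarrow> y \<in> S \<Longrightarrow> x + y \<in> S"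
  using is_subring_diff[of S x "0 - y"] is_subring_diff[of S 0 y] is_subring_0[of S] by simp

lemma is_subring_sum:
  "is_subring S \<Longrightarrow> (\<And>i. i \<in> A \<Longrightarrow> f i \<in> S) \<Longrightarrow> sum f A \<in> S"
  by (induction A rule: infinite_finite_induct) (auto simp: is_subring_0 is_subring_add)

lemma is_subring_Union_chain:
  assumes "subset.chain A C" "C \<noteq> {}" "\<And>R. R \<in> C \<Longrightarrow> is_subring R"
  shows "is_subring (\<Union>C)"
  unfolding is_subring_def
proof (intro conjI ballI)
  show "1 \<in> \<Union>C" using assms(2,3) is_subring_one by blast
next
  fix a b assume "a \<in> \<Union>C" "b \<in> \<Union>C"
  then obtain R where "R \<in> C" "a \<in> R" "b \<in> R"
    using assms(1) unfolding subset.chain_def by blast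
  then show "a - b \<in> \<Union>C" "a * b \<in> \<Union>C"
    using assms(3) is_subring_diff is_subring_mult by blast+
qed

text \<open>Zorn's lemma applies because a proper subring over S can never absorb the finite set X,
  so properness survives unions of chains.\<close>
lemma ex_maximal_subring_finitely_generated_over:
  fixes S :: "'a::ring_1 set"
  assumes S: "is_subring S" "S \<noteq> UNIV" and X: "finite X"
    and generates: "\<And>R. is_subring R \<Longrightarrow> S \<subseteq> R \<Longrightarrow> X \<subseteq> R \<Longrightarrow> R = UNIV"
  shows "\<exists>S' :: 'a set. maximal_subring S'"
proof -
  let ?A = "{R. is_subring R \<and> S \<subseteq> R \<and> R \<noteq> UNIV}"
  have "\<exists>M\<in>?A. \<forall>R\<in>?A. M \<subseteq> R \<longrightarrow> R = M"
  proof (rule subset_Zorn_nonempty)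
    show "?A \<noteq> {}" using S by blast
  next
    fix C assume C: "C \<noteq> {}" "subset.chain ?A C"
    then have CA: "C \<subseteq> ?A" unfolding subset.chain_def by blast
    have "\<Union>C \<noteq> UNIV"
    proof
      assume "\<Union>C = UNIV"
      then obtain R where "R \<in> C" "X \<subseteq> R"
        using finite_subset_Union_chain[OF X _ C(1,2)] by blast
      with CA generates show False by blast
    qed
    moreover have "is_subring (\<Union>C)" using is_subring_Union_chain[OF C(2,1)] CA by blast
    ultimately show "\<Union>C \<in> ?A" using C(1) CA by blast
  qed
  then obtain M where "M \<in> ?A" "\<forall>R\<in>?A. M \<subseteq> R \<longrightarrow> R = M" by blast
  then have "maximal_subring M" unfolding maximal_subring_def by blast
  then show ?thesis by blast
qed

text \<open>The idealiser Q of M is a subring not containing u, and every subring containing Q and u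
  contains M u + M, which is all of T by maximality of M.\<close>
lemma ex_maximal_subring_if_not_right_ideal:
  fixes M :: "'a::ring_1 set"
  assumes M: "maximal_left_ideal M" and m: "m \<in> M" and mu: "m * u \<notin> M"
  shows "\<exists>S :: 'a set. maximal_subring S"
proof -
  have li: "left_ideal M" using M by (rule maximal_left_ideal_left_ideal)
  define Q where "Q = {r. \<forall>x\<in>M. x * r \<in> M}"
  have "is_subring Q"
    unfolding is_subring_def Q_def
    using left_ideal_diff[OF li] by (simp add: right_diff_distrib flip: mult.assoc)
  moreover have "Q \<noteq> UNIV" using m mu unfolding Q_def by blast
  moreover have "R = UNIV" if R: "is_subring R" "Q \<subseteq> R" "{u} \<subseteq> R" for R
  proof -
    let ?L = "{k * u + x | k x. k \<in> M \<and> x \<in> M}"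
    have "m * u + 0 \<in> ?L" using m left_ideal_0[OF li] by blast
    then have "?L = UNIV"
      using maximal_left_ideal_eq_UNIV[OF M left_ideal_times_plus[OF li li] subset_times_plus[OF li]] mu
      by simp
    have "M \<subseteq> R" using R(2) left_ideal_mult_left[OF li] unfolding Q_def by blast
    show "R = UNIV"
    proof (intro set_eqI iffI)
      fix y :: 'a
      from \<open>?L = UNIV\<close> obtain k x where "y = k * u + x" "k \<in> M" "x \<in> M" by blast
      with \<open>M \<subseteq> R\<close> R show "y \<in> R" using is_subring_add[OF R(1)] is_subring_mult[OF R(1)] by blast
    qed simp
  qed
  ultimately show ?thesis using ex_maximal_subring_finitely_generated_over[of Q "{u}"] by blast
qed

definition root_of_monic_central :: "nat \<Rightarrow> 'a::ring_1 \<Rightarrow> bool" where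
  "root_of_monic_central n t \<longleftrightarrow>
     (\<exists>f. (\<forall>i<n. f i \<in> ring_center) \<and> t ^ n + (\<Sum>i<n. f i * t ^ i) = 0)"

lemma integrally_closed_in_center_iff:
  "integrally_closed_in (ring_center :: 'a::ring_1 set) \<longleftrightarrow>
     (\<forall>n (t :: 'a). root_of_monic_central n t \<longrightarrow> t \<in> ring_center)"
  unfolding integrally_closed_in_def root_of_monic_central_def by blast

lemma root_of_monic_central_pos: "root_of_monic_central n t \<Longrightarrow> 0 < n"
  unfolding root_of_monic_central_def by (cases n) auto

lemma monic_root_sum_power_eq:
  assumes f: "\<forall>l<n. f l \<in> ring_center" and root: "t ^ n + (\<Sum>l<n. f l * t ^ l) = 0"
  shows "(\<Sum>i\<in>J. x i * t ^ n * c i) = - (\<Sum>l<n. f l * (\<Sum>i\<in>J. x i * t ^ l * c i))"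
proof -
  have "x i * t ^ n * c i = - (\<Sum>l<n. f l * (x i * t ^ l * c i))" for i
  proof -
    have "t ^ n = - (\<Sum>l<n. f l * t ^ l)" using root by (metis add.commute add_eq_0_iff)
    then have "x i * t ^ n * c i = - (\<Sum>l<n. x i * (f l * t ^ l) * c i)"
      by (simp add: sum_distrib_left sum_distrib_right)
    also have "(\<Sum>l<n. x i * (f l * t ^ l) * c i) = (\<Sum>l<n. f l * (x i * t ^ l * c i))"
      using f unfolding ring_center_def by (intro sum.cong) (simp_all add: mult.assoc)
    finally show ?thesis .
  qed
  then have "(\<Sum>i\<in>J. x i * t ^ n * c i) = - (\<Sum>i\<in>J. \<Sum>l<n. f l * (x i * t ^ l * c i))"
    by (simp add: sum_negf)
  also have "\<dots> = - (\<Sum>l<n. f l * (\<Sum>i\<in>J. x i * t ^ l * c i))"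
    by (simp add: sum.swap[of _ J] sum_distrib_left)
  finally show ?thesis .
qed

text \<open>Here T/M is a division ring; the lemmas below do linear algebra over it, working with
  representatives modulo M.\<close>
locale maximal_two_sided_ideal =
  fixes M :: "'a::ring_1 set"
  assumes maximal: "maximal_left_ideal M"
    and mult_right: "x \<in> M \<Longrightarrow> x * r \<in> M"
begin

lemma ideal: "left_ideal M"
  using maximal by (rule maximal_left_ideal_left_ideal)

lemma notin_if_diff_one_mem: "x - 1 \<in> M \<Longrightarrow> x \<notin> M"
  using left_ideal_diff[OF ideal, of x "x - 1"] maximal_left_ideal_one_notin[OF maximal] by auto

lemma inverse_mod:
  assumes x: "x \<notin> M"
  obtains y where "x * y - 1 \<in> M" "y * x - 1 \<in> M"
proof -
  obtain y where y: "y * x - 1 \<in> M" using maximal_left_ideal_left_inverse[OF maximal x] .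
  have "y \<notin> M" using notin_if_diff_one_mem[OF y] mult_right by blast
  then obtain z where z: "z * y - 1 \<in> M" using maximal_left_ideal_left_inverse[OF maximal] by blast
  have "x - z = z * (y * x - 1) - (z * y - 1) * x" by (simp add: algebra_simps)
  then have xz: "x - z \<in> M"
    using left_ideal_diff[OF ideal] left_ideal_mult_left[OF ideal y] mult_right[OF z] by metis
  have "x * y - 1 = (x - z) * y + (z * y - 1)" by (simp add: algebra_simps)
  then have "x * y - 1 \<in> M" using left_ideal_add[OF ideal mult_right[OF xz] z] by metis
  with y show ?thesis using that by blast
qed

lemma commutator_mem: "y - z \<in> M \<Longrightarrow> t * z = z * t \<Longrightarrow> t * y - y * t \<in> M"
proof -
  assume "y - z \<in> M" "t * z = z * t"
  then have "t * y - y * t = t * (y - z) - (y - z) * t" by (simp add: algebra_simps)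
  with \<open>y - z \<in> M\<close> show ?thesis
    using left_ideal_diff[OF ideal] left_ideal_mult_left[OF ideal] mult_right by metis
qed

lemma homogeneous_system_nontrivial_solution:
  "finite J \<Longrightarrow> m < card J \<Longrightarrow> \<exists>c. (\<exists>i\<in>J. c i \<notin> M) \<and> (\<forall>j<m. (\<Sum>i\<in>J. a j i * c i) \<in> M)"
proof (induction m arbitrary: J a)
  case 0
  then obtain i where "i \<in> J" by fastforce
  then show ?case using maximal_left_ideal_one_notin[OF maximal] by (intro exI[of _ "\<lambda>_. 1"]) auto
next
  case (Suc m)
  show ?case
  proof (cases "\<forall>i\<in>J. a m i \<in> M")
    case True
    obtain c where c: "\<exists>i\<in>J. c i \<notin> M" "\<forall>j<m. (\<Sum>i\<in>J. a j i * c i) \<in> M"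
      using Suc by (meson Suc_lessD)
    have "(\<Sum>i\<in>J. a m i * c i) \<in> M" using True by (intro left_ideal_sum[OF ideal]) (simp add: mult_right)
    with c show ?thesis by (auto simp: less_Suc_eq)
  next
    case False
    then obtain p where p: "p \<in> J" "a m p \<notin> M" by blast
    obtain e where e: "a m p * e - 1 \<in> M" using inverse_mod[OF p(2)] by blast
    let ?J = "J - {p}"
    define b where "b j i = a j i - a j p * e * a m i" for j i
    obtain c where c: "\<exists>i\<in>?J. c i \<notin> M" "\<forall>j<m. (\<Sum>i\<in>?J. b j i * c i) \<in> M"
      using Suc.IH[of ?J b] Suc.prems p(1) by fastforce
    define X where "X = (\<Sum>i\<in>?J. a m i * c i)"
    define c' where "c' = c(p := - (e * X))"
    have sum_c': "(\<Sum>i\<in>J. a j i * c' i) = - (a j p * e * X) + (\<Sum>i\<in>?J. a j i * c i)" for j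
    proof -
      have "(\<Sum>i\<in>?J. a j i * c' i) = (\<Sum>i\<in>?J. a j i * c i)" by (simp add: c'_def)
      then show ?thesis using Suc.prems(1) p(1) by (simp add: sum.remove c'_def mult.assoc)
    qed
    have "(\<Sum>i\<in>J. a j i * c' i) \<in> M" if "j < Suc m" for j
    proof (cases "j = m")
      case True
      have "- (a m p * e * X) + X = - ((a m p * e - 1) * X)" by (simp add: algebra_simps)
      then show ?thesis
        using sum_c'[of m] left_ideal_uminus[OF ideal mult_right[OF e]] True X_def by simp
    next
      case False
      with that have "(\<Sum>i\<in>?J. b j i * c i) \<in> M" using c(2) by simp
      moreover have "(\<Sum>i\<in>?J. b j i * c i) = (\<Sum>i\<in>?J. a j i * c i) - a j p * e * X"
        unfolding b_def X_def
        by (simp add: left_diff_distrib sum_subtractf sum_distrib_left mult.assoc)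
      ultimately show ?thesis unfolding sum_c'[of j] by (simp add: algebra_simps)
    qed
    moreover have "\<exists>i\<in>J. c' i \<notin> M" using c(1) by (auto simp: c'_def)
    ultimately show ?thesis by blast
  qed
qed

text \<open>The preimage of the centraliser of t + M in the division ring T/M.\<close>
definition centralizer_mod :: "'a \<Rightarrow> 'a set" where
  "centralizer_mod t = {y. t * y - y * t \<in> M}"

lemma is_subring_centralizer_mod: "is_subring (centralizer_mod t)"
  unfolding is_subring_def centralizer_mod_def
proof (intro conjI ballI CollectI)
  show "t * 1 - 1 * t \<in> M" using left_ideal_0[OF ideal] by simp
next
  fix a b assume a: "a \<in> {y. t * y - y * t \<in> M}" and b: "b \<in> {y. t * y - y * t \<in> M}"
  have "t * (a - b) - (a - b) * t = (t * a - a * t) - (t * b - b * t)"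
    by (simp add: algebra_simps)
  then show "t * (a - b) - (a - b) * t \<in> M" using a b left_ideal_diff[OF ideal] by simp
  have "t * (a * b) - (a * b) * t = (t * a - a * t) * b + a * (t * b - b * t)"
    by (simp add: algebra_simps)
  then show "t * (a * b) - (a * b) * t \<in> M"
    using a b left_ideal_add[OF ideal] mult_right left_ideal_mult_left[OF ideal] by simp
qed

lemma subset_centralizer_mod: "M \<subseteq> centralizer_mod t"
  unfolding centralizer_mod_def using commutator_mem[of _ 0 t] by auto

lemma centralizer_mod_inverse:
  assumes c: "c \<in> centralizer_mod t" and d: "c * d - 1 \<in> M" "d * c - 1 \<in> M"
  shows "d \<in> centralizer_mod t"
proof -
  have "t * d - d * t = d * t * (c * d - 1) - d * (t * c - c * t) * d - (d * c - 1) * t * d"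
    by (simp add: algebra_simps)
  moreover have "d * t * (c * d - 1) \<in> M" using left_ideal_mult_left[OF ideal d(1)] .
  moreover have "(d * c - 1) * t * d \<in> M" using mult_right[OF mult_right[OF d(2)]] .
  moreover have "d * (t * c - c * t) * d \<in> M"
    using c mult_right left_ideal_mult_left[OF ideal] unfolding centralizer_mod_def by blast
  ultimately show ?thesis
    unfolding centralizer_mod_def using left_ideal_diff[OF ideal] by simp
qed

definition power_system_solution :: "'b set \<Rightarrow> ('b \<Rightarrow> 'a) \<Rightarrow> 'a \<Rightarrow> nat \<Rightarrow> ('b \<Rightarrow> 'a) \<Rightarrow> bool" where
  "power_system_solution J x t n c \<longleftrightarrow> (\<forall>j<n. (\<Sum>i\<in>J. x i * t ^ j * c i) \<in> M)"

lemma ex_nontrivial_power_system_solution: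
  "finite J \<Longrightarrow> n < card J \<Longrightarrow> \<exists>c. (\<exists>i\<in>J. c i \<notin> M) \<and> power_system_solution J x t n c"
  unfolding power_system_solution_def by (rule homogeneous_system_nontrivial_solution)

lemma power_system_solution_mult_right:
  assumes "power_system_solution J x t n c"
  shows "power_system_solution J x t n (\<lambda>i. c i * d)"
  unfolding power_system_solution_def
proof (intro allI impI)
  fix j assume "j < n"
  then have "(\<Sum>i\<in>J. x i * t ^ j * c i) * d \<in> M"
    using assms mult_right unfolding power_system_solution_def by blast
  then show "(\<Sum>i\<in>J. x i * t ^ j * (c i * d)) \<in> M"
    by (simp add: sum_distrib_right mult.assoc)
qed

text \<open>This is where integrality of t over the centre enters: the equation for t ^ n follows from
  the lower ones.\<close>
lemma power_system_solution_commutator: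
  assumes t: "root_of_monic_central n t" and c: "power_system_solution J x t n c"
  shows "power_system_solution J x t n (\<lambda>i. t * c i - c i * t)"
  unfolding power_system_solution_def
proof (intro allI impI)
  fix j assume j: "j < n"
  have "x i * t ^ j * (t * c i - c i * t) = x i * t ^ Suc j * c i - x i * t ^ j * c i * t" for i
    by (simp add: right_diff_distrib mult.assoc power_Suc2 del: power_Suc)
  then have eq: "(\<Sum>i\<in>J. x i * t ^ j * (t * c i - c i * t)) =
      (\<Sum>i\<in>J. x i * t ^ Suc j * c i) - (\<Sum>i\<in>J. x i * t ^ j * c i) * t"
    by (simp add: sum_subtractf sum_distrib_right)
  have "(\<Sum>i\<in>J. x i * t ^ Suc j * c i) \<in> M"
  proof (cases "Suc j < n")
    case True
    then show ?thesis using c unfolding power_system_solution_def by blast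
  next
    case False
    with j have "Suc j = n" by simp
    obtain f where "\<forall>l<n. f l \<in> ring_center" "t ^ n + (\<Sum>l<n. f l * t ^ l) = 0"
      using t unfolding root_of_monic_central_def by blast
    then have sum_n: "(\<Sum>i\<in>J. x i * t ^ n * c i) = - (\<Sum>l<n. f l * (\<Sum>i\<in>J. x i * t ^ l * c i))"
      by (rule monic_root_sum_power_eq)
    have "(\<Sum>l<n. f l * (\<Sum>i\<in>J. x i * t ^ l * c i)) \<in> M"
      using c unfolding power_system_solution_def
      by (intro left_ideal_sum[OF ideal]) (simp add: left_ideal_mult_left[OF ideal])
    then show ?thesis using \<open>Suc j = n\<close> sum_n left_ideal_uminus[OF ideal] by simp
  qed
  moreover have "(\<Sum>i\<in>J. x i * t ^ j * c i) * t \<in> M"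
    using c j mult_right unfolding power_system_solution_def by blast
  ultimately show "(\<Sum>i\<in>J. x i * t ^ j * (t * c i - c i * t)) \<in> M"
    unfolding eq using left_ideal_diff[OF ideal] by blast
qed

text \<open>Take a nontrivial solution of minimal support and scale it to have a coordinate congruent
  to 1. Its commutator with t is again a solution with strictly smaller support, hence trivial.\<close>
lemma ex_centralizer_dependence:
  assumes t: "root_of_monic_central n t" and J: "finite J" "n < card J"
  shows "\<exists>c. (\<forall>i\<in>J. c i \<in> centralizer_mod t) \<and> (\<exists>i\<in>J. c i \<notin> M) \<and> (\<Sum>i\<in>J. x i * c i) \<in> M"
proof -
  let ?sol = "\<lambda>c. (\<exists>i\<in>J. c i \<notin> M) \<and> power_system_solution J x t n c"
  let ?supp = "\<lambda>c. {i\<in>J. c i \<notin> M}"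
  obtain c where c: "?sol c" and min: "\<And>c'. ?sol c' \<Longrightarrow> card (?supp c) \<le> card (?supp c')"
    using ex_has_least_nat[of ?sol _ "\<lambda>c. card (?supp c)"] ex_nontrivial_power_system_solution[OF J]
    by blast
  then obtain p where p: "p \<in> J" "c p \<notin> M" by blast
  obtain d where d: "c p * d - 1 \<in> M" using inverse_mod[OF p(2)] by blast
  define c' where "c' i = c i * d" for i
  define c'' where "c'' i = t * c' i - c' i * t" for i
  have sol': "power_system_solution J x t n c'"
    unfolding c'_def using c power_system_solution_mult_right by blast
  have supp: "?supp c'' \<subseteq> ?supp c - {p}"
  proof
    fix i assume i: "i \<in> ?supp c''"
    have "c' i \<notin> M" using i commutator_mem[of "c' i" 0 t] unfolding c''_def by auto
    then have "c i \<notin> M" unfolding c'_def using mult_right by blast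
    moreover have "i \<noteq> p" using i commutator_mem[of "c' p" 1 t] d unfolding c''_def c'_def by auto
    ultimately show "i \<in> ?supp c - {p}" using i by blast
  qed
  have fin: "finite (?supp c)" using J(1) by simp
  have "card (?supp c'') \<le> card (?supp c - {p})" using card_mono[OF _ supp] fin by blast
  also have "\<dots> < card (?supp c)" using card_Diff1_less[OF fin] p by blast
  finally have "card (?supp c'') < card (?supp c)" .
  then have "\<not> ?sol c''" using min by (meson not_le)
  then have "\<forall>i\<in>J. c' i \<in> centralizer_mod t"
    using power_system_solution_commutator[OF t sol'] unfolding c''_def centralizer_mod_def by blast
  moreover have "c' p \<notin> M" using notin_if_diff_one_mem d unfolding c'_def by blast
  moreover have "(\<Sum>i\<in>J. x i * c' i) \<in> M"
    using sol' root_of_monic_central_pos[OF t] unfolding power_system_solution_def by fastforce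
  ultimately show ?thesis using p(1) by blast
qed

definition right_independent_mod :: "'a set \<Rightarrow> nat \<Rightarrow> (nat \<Rightarrow> 'a) \<Rightarrow> bool" where
  "right_independent_mod S k z \<longleftrightarrow>
     (\<forall>c. (\<forall>i<k. c i \<in> S) \<and> (\<Sum>i<k. z i * c i) \<in> M \<longrightarrow> (\<forall>i<k. c i \<in> M))"

lemma right_independent_mod_centralizer_le:
  assumes t: "root_of_monic_central n t" and z: "right_independent_mod (centralizer_mod t) k z"
  shows "k \<le> n"
proof (rule ccontr)
  assume "\<not> k \<le> n"
  then obtain c where "\<forall>i<k. c i \<in> centralizer_mod t" "\<exists>i<k. c i \<notin> M" "(\<Sum>i<k. z i * c i) \<in> M"
    using ex_centralizer_dependence[OF t, of "{..<k}" z] by auto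
  with z show False unfolding right_independent_mod_def by blast
qed

lemma mem_subring_if_right_dependent_mod:
  assumes z: "right_independent_mod (centralizer_mod t) k z"
    and y: "\<not> right_independent_mod (centralizer_mod t) (Suc k) (z(k := y))"
    and R: "is_subring R" "centralizer_mod t \<subseteq> R" "z ` {..<k} \<subseteq> R"
  shows "y \<in> R"
proof -
  let ?S = "centralizer_mod t"
  obtain c where c: "\<forall>i<Suc k. c i \<in> ?S" "\<exists>i<Suc k. c i \<notin> M"
    and "(\<Sum>i<Suc k. (z(k := y)) i * c i) \<in> M"
    using y unfolding right_independent_mod_def by blast
  moreover have "(\<Sum>i<k. (z(k := y)) i * c i) = (\<Sum>i<k. z i * c i)"
    by (rule sum.cong) auto
  ultimately have comb: "(\<Sum>i<k. z i * c i) + y * c k \<in> M" by simp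
  have "c k \<notin> M"
  proof
    assume "c k \<in> M"
    then have "(\<Sum>i<k. z i * c i) \<in> M"
      using comb left_ideal_diff[OF ideal] left_ideal_mult_left[OF ideal] by (metis add_diff_cancel_right')
    moreover have "\<forall>i<k. c i \<in> ?S" using c(1) by simp
    ultimately have "\<forall>i<k. c i \<in> M" using z unfolding right_independent_mod_def by blast
    with c(2) \<open>c k \<in> M\<close> show False by (auto simp: less_Suc_eq)
  qed
  then obtain d where d: "c k * d - 1 \<in> M" "d * c k - 1 \<in> M" using inverse_mod by blast
  have "d \<in> ?S" using centralizer_mod_inverse[OF _ d] c(1) by simp
  have "(\<Sum>i<k. z i * (c i * d)) = (\<Sum>i<k. z i * c i) * d"
    by (simp add: sum_distrib_right mult.assoc)
  then have "y = ((\<Sum>i<k. z i * c i) + y * c k) * d - (\<Sum>i<k. z i * (c i * d)) - y * (c k * d - 1)"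
    by (simp add: algebra_simps)
  moreover have "((\<Sum>i<k. z i * c i) + y * c k) * d \<in> R"
    using mult_right[OF comb] subset_centralizer_mod R(2) by blast
  moreover have "y * (c k * d - 1) \<in> R"
    using left_ideal_mult_left[OF ideal d(1)] subset_centralizer_mod R(2) by blast
  moreover have "(\<Sum>i<k. z i * (c i * d)) \<in> R"
  proof (rule is_subring_sum[OF R(1)])
    fix i assume "i \<in> {..<k}"
    then have "z i \<in> R" "c i \<in> R" using R(2,3) c(1) by auto
    then show "z i * (c i * d) \<in> R" using \<open>d \<in> ?S\<close> R(2) is_subring_mult[OF R(1)] by blast
  qed
  ultimately show ?thesis using is_subring_diff[OF R(1)] by metis
qed

text \<open>T/M is finite dimensional over the division subring centralising t + M, so T is finitely
  generated as a ring over the proper subring centralizer_mod t.\<close>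
lemma ex_maximal_subring_if_not_commute_mod:
  assumes t: "root_of_monic_central n t" and x: "t * x - x * t \<notin> M"
  shows "\<exists>S :: 'a set. maximal_subring S"
proof -
  let ?S = "centralizer_mod t"
  have "\<exists>z. right_independent_mod ?S 0 z" unfolding right_independent_mod_def by simp
  moreover have "\<forall>k. (\<exists>z. right_independent_mod ?S k z) \<longrightarrow> k \<le> n"
    using right_independent_mod_centralizer_le[OF t] by blast
  ultimately have "\<exists>k. (\<exists>z. right_independent_mod ?S k z) \<and>
      (\<forall>k'. (\<exists>z. right_independent_mod ?S k' z) \<longrightarrow> k' \<le> k)"
    by (rule Nat.ex_has_greatest_nat)
  then obtain k z where z: "right_independent_mod ?S k z"
    and k_max: "\<forall>k'. (\<exists>z. right_independent_mod ?S k' z) \<longrightarrow> k' \<le> k"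
    by blast
  have "R = UNIV" if R: "is_subring R" "?S \<subseteq> R" "z ` {..<k} \<subseteq> R" for R
  proof (intro set_eqI iffI)
    fix y :: 'a
    have "\<not> right_independent_mod ?S (Suc k) (z(k := y))"
    proof
      assume "right_independent_mod ?S (Suc k) (z(k := y))"
      then have "Suc k \<le> k" using k_max by blast
      then show False by simp
    qed
    then show "y \<in> R" using mem_subring_if_right_dependent_mod[OF z _ R] by blast
  qed simp
  moreover have "?S \<noteq> UNIV" using x unfolding centralizer_mod_def by blast
  ultimately show ?thesis
    using ex_maximal_subring_finitely_generated_over[of ?S "z ` {..<k}"] is_subring_centralizer_mod
    by blast
qed

end

lemma ex_maximal_subring_if_noncentral_root:
  fixes t :: "'a::ring_1"
  assumes J: "jacobson_radical = ({0} :: 'a set)"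
    and t: "root_of_monic_central n t" and noncentral: "t \<notin> ring_center"
  shows "\<exists>S :: 'a set. maximal_subring S"
proof -
  obtain x where "t * x - x * t \<noteq> 0" using noncentral unfolding ring_center_def by auto
  then obtain M where M: "maximal_left_ideal M" "t * x - x * t \<notin> M"
    using J unfolding jacobson_radical_def by blast
  show ?thesis
  proof (cases "\<forall>m\<in>M. \<forall>r. m * r \<in> M")
    case True
    interpret maximal_two_sided_ideal M
      using M(1) True by unfold_locales auto
    show ?thesis using ex_maximal_subring_if_not_commute_mod[OF t M(2)] .
  next
    case False
    then show ?thesis using ex_maximal_subring_if_not_right_ideal[OF M(1)] by blast
  qed
qed

theorem corollary3p13:
  assumes "jacobson_radical = ({0} :: 'a::ring_1 set)"
  shows "(\<exists>S :: 'a set. maximal_subring S) \<or> integrally_closed_in (ring_center :: 'a set)"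
  unfolding integrally_closed_in_center_iff
  using ex_maximal_subring_if_noncentral_root[OF assms] by blast

end
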